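(* Let $A$ be an uncountable abelian Polish group. Then at least one of the following holds: (1) $\ell^1(\mathbb Z)\sqsubseteq^{\mathbb Z}A$; (2) $(\mathbb Z/p\mathbb Z)^{\mathbb N}\sqsubseteq^{\mathbb Z}A$ for some prime $p$.
   Context: $\mathbb Z$ carries the usual absolute value (a proper norm) and the discrete topology; abelian Polish groups are Polish $\mathbb Z$-modules. $M\sqsubseteq^{\mathbb Z}N$ means there is a continuous group homomorphism $M\to N$ which is injective. $\ell^1(\mathbb Z)=\{(n_k)_{k\in\mathbb N}\in\mathbb Z^{\mathbb N}:\sum_k|n_k|/k!<\infty\}$ with the norm $\sum_k|n_k|/k!$ (and associated metric topology). $(\mathbb Z/p\mathbb Z)^{\mathbb N}$ has the product topology. *)

theory Defs
  imports "HOL-Analysis.Analysis"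
begin

definition ell1Z :: "(nat \<Rightarrow> int) set" where
  "ell1Z = {n. summable (\<lambda>k. real_of_int \<bar>n k\<bar> / fact k)}"

definition ell1_norm :: "(nat \<Rightarrow> int) \<Rightarrow> real" where
  "ell1_norm n = (\<Sum>k. real_of_int \<bar>n k\<bar> / fact k)"

definition ell1Z_embeds :: "('a::{topological_space, ab_group_add}) itself \<Rightarrow> bool" where
  "ell1Z_embeds _ \<longleftrightarrow> (\<exists>f :: (nat \<Rightarrow> int) \<Rightarrow> 'a.
      (\<forall>x\<in>ell1Z. \<forall>y\<in>ell1Z. f (\<lambda>k. x k + y k) = f x + f y) \<and>
      inj_on f ell1Z \<and>
      (\<forall>x\<in>ell1Z. \<forall>U. open U \<and> f x \<in> U \<longrightarrow>
          (\<exists>d>0. \<forall>y\<in>ell1Z. ell1_norm (\<lambda>k. y k - x k) < d \<longrightarrow> f y \<in> U)))"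

text \<open>(Z/pZ)^N, realised as sequences with values in {0..<p}, addition pointwise mod p,
  and the product topology of discrete topologies.\<close>

definition ZpN :: "int \<Rightarrow> (nat \<Rightarrow> int) set" where
  "ZpN p = PiE UNIV (\<lambda>_. {0..<p})"

definition ZpN_add :: "int \<Rightarrow> (nat \<Rightarrow> int) \<Rightarrow> (nat \<Rightarrow> int) \<Rightarrow> (nat \<Rightarrow> int)" where
  "ZpN_add p x y = (\<lambda>k. (x k + y k) mod p)"

definition ZpN_topology :: "int \<Rightarrow> (nat \<Rightarrow> int) topology" where
  "ZpN_topology p = product_topology (\<lambda>_. discrete_topology {0..<p}) UNIV"

definition ZpN_embeds :: "int \<Rightarrow> ('a::{topological_space, ab_group_add}) itself \<Rightarrow> bool" where
  "ZpN_embeds p _ \<longleftrightarrow> (\<exists>f :: (nat \<Rightarrow> int) \<Rightarrow> 'a.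
      (\<forall>x\<in>ZpN p. \<forall>y\<in>ZpN p. f (ZpN_add p x y) = f x + f y) \<and>
      inj_on f (ZpN p) \<and>
      continuous_map (ZpN_topology p) euclidean f)"

definition topological_group_ax :: "('a::{topological_space, ab_group_add}) itself \<Rightarrow> bool" where
  "topological_group_ax _ \<longleftrightarrow>
     continuous_on UNIV (\<lambda>z::'a \<times> 'a. fst z + snd z) \<and> continuous_on UNIV (uminus :: 'a \<Rightarrow> 'a)"

end

theory Submission
  imports Defs
begin

text \<open>
  If for some prime \<open>p\<close> the \<open>p\<close>-torsion subgroup of \<open>A\<close> is uncountable, let \<open>H\<close> be that subgroup;
  otherwise let \<open>H = A\<close>, and then every torsion subgroup \<open>{x. m x = 0}\<close> with \<open>m \<noteq> 0\<close> is countable.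
  By second countability every neighbourhood of \<open>0\<close> meets \<open>H\<close> in uncountably many points. So one
  can pick \<open>a 0, a 1, \<dots>\<close> in \<open>H\<close> one after another such that the cyclic group generated by \<open>a k\<close>
  meets the group generated by its predecessors trivially (and \<open>a k\<close> is nonzero, resp. of infinite
  order), and such that every tail \<open>\<Sum>i\<ge>K. n i a i\<close> with \<open>\<bar>n i\<bar> \<le> i * i!\<close> moves each of the finitely
  many partial sums \<open>s = \<Sum>i<K. n i a i\<close> with \<open>\<bar>n i\<bar> \<le> K * i!\<close> by less than \<open>2^-K\<close> and by less than
  half the distance from \<open>s\<close> to \<open>0\<close>. Then \<open>n \<mapsto> \<Sum>i. n i a i\<close> converges whenever \<open>\<bar>n i\<bar> \<le> K * i!\<close>
  for some \<open>K\<close>, which covers both \<open>\<ell>\<^sup>1(\<int>)\<close> and \<open>(\<int>/p\<int>)\<^sup>\<nat>\<close>. The map is additive, continuous because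
  sequences that agree below \<open>K\<close> have sums at distance at most \<open>2^(1-K)\<close>, and injective because a
  vanishing sum forces every such partial sum, hence by independence every \<open>n i a i\<close>, to vanish.
\<close>

section \<open>Integer multiples in abelian groups\<close>

fun nscale :: "nat \<Rightarrow> 'a::ab_group_add \<Rightarrow> 'a" where
  "nscale 0 x = 0"
| "nscale (Suc n) x = x + nscale n x"

definition zscale :: "int \<Rightarrow> 'a::ab_group_add \<Rightarrow> 'a" where
  "zscale m x = nscale (nat m) x - nscale (nat (- m)) x"

lemma nscale_add_left: "nscale (m + n) x = nscale m x + nscale n x"
  by (induction m) (auto simp: algebra_simps)

lemma nscale_add_right: "nscale n (x + y) = nscale n x + nscale n y"
  by (induction n) (auto simp: algebra_simps)

lemma nscale_minus_right: "nscale n (- x) = - nscale n x"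
  by (induction n) (auto simp: algebra_simps)

lemma nscale_zero_right [simp]: "nscale n 0 = 0"
  by (induction n) auto

lemma nscale_diff_right: "nscale n (x - y) = nscale n x - nscale n y"
  using nscale_add_right[of n x "- y"] by (simp add: nscale_minus_right)

lemma nscale_nscale: "nscale m (nscale n x) = nscale (m * n) x"
  by (induction m) (auto simp: nscale_add_left nscale_add_right)

lemma zscale_of_nat_diff: "zscale (int i - int j) x = nscale i x - nscale j x"
proof (cases "j \<le> i")
  case True
  then have "nscale i x = nscale (i - j) x + nscale j x"
    using nscale_add_left[of "i - j" j x] by simp
  with True show ?thesis
    by (simp add: zscale_def nat_diff_distrib)
next
  case False
  then have "nscale j x = nscale (j - i) x + nscale i x"
    using nscale_add_left[of "j - i" i x] by simp
  with False show ?thesis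
    by (simp add: zscale_def nat_diff_distrib)
qed

lemma zscale_add_left: "zscale (a + b) x = zscale a x + zscale b x"
proof -
  obtain i j k l where a: "a = int i - int j" and b: "b = int k - int l"
    by (metis int_diff_cases)
  have "a + b = int (i + k) - int (j + l)"
    unfolding a b by simp
  then have "zscale (a + b) x = nscale (i + k) x - nscale (j + l) x"
    by (simp only: zscale_of_nat_diff)
  also have "\<dots> = (nscale i x - nscale j x) + (nscale k x - nscale l x)"
    by (simp add: nscale_add_left)
  also have "\<dots> = zscale a x + zscale b x"
    by (simp only: a b zscale_of_nat_diff)
  finally show ?thesis .
qed

lemma zscale_zero_left [simp]: "zscale 0 x = 0"
  by (simp add: zscale_def)

lemma zscale_zero_right [simp]: "zscale m 0 = 0"
  by (simp add: zscale_def)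

lemma zscale_one [simp]: "zscale 1 x = x"
  by (simp add: zscale_def)

lemma zscale_minus_left: "zscale (- m) x = - zscale m x"
  by (simp add: zscale_def)

lemma zscale_diff_right: "zscale m (x - y) = zscale m x - zscale m y"
  by (simp add: zscale_def nscale_diff_right)

lemma zscale_zscale: "zscale a (zscale b x) = zscale (a * b) x"
proof -
  obtain i j k l where a: "a = int i - int j" and b: "b = int k - int l"
    by (metis int_diff_cases)
  have "zscale a (zscale b x) = nscale i (nscale k x - nscale l x) - nscale j (nscale k x - nscale l x)"
    by (simp only: a b zscale_of_nat_diff)
  also have "\<dots> = nscale (i * k + j * l) x - nscale (i * l + j * k) x"
    by (simp add: nscale_add_left nscale_diff_right nscale_nscale)
  also have "\<dots> = zscale (int (i * k + j * l) - int (i * l + j * k)) x"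
    by (simp only: zscale_of_nat_diff)
  also have "int (i * k + j * l) - int (i * l + j * k) = a * b"
    unfolding a b by (simp add: algebra_simps)
  finally show ?thesis .
qed

lemma zscale_mod:
  assumes "zscale p x = 0"
  shows "zscale (m mod p) x = zscale m x"
proof -
  have "zscale m x = zscale (m div p * p + m mod p) x"
    by simp
  also have "\<dots> = zscale (m mod p) x"
    by (simp only: zscale_add_left) (simp add: zscale_zscale[symmetric] assms)
  finally show ?thesis
    by (rule sym)
qed

lemma zscale_eq_0_if_coprime:
  assumes "zscale p x = 0" "zscale m x = 0" "coprime m p"
  shows "x = 0"
proof -
  obtain u v where "u * m + v * p = 1"
    using bezout_int[of m p] assms(3) by auto
  then have "x = zscale (u * m + v * p) x"
    by simp
  also have "\<dots> = 0"
    by (simp add: zscale_add_left zscale_zscale[symmetric] assms)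
  finally show ?thesis .
qed

definition torsion :: "int \<Rightarrow> 'a::ab_group_add set" where
  "torsion m = {x. zscale m x = 0}"

lemma countable_zscale_fibre:
  assumes "countable (torsion m :: 'a::ab_group_add set)"
  shows "countable {x::'a. zscale m x = t}"
proof (cases "\<exists>x0. zscale m x0 = t")
  case True
  then obtain x0 where x0: "zscale m x0 = t" ..
  have "{x. zscale m x = t} \<subseteq> (\<lambda>s. x0 + s) ` torsion m"
  proof
    fix x assume "x \<in> {x. zscale m x = t}"
    then have "x - x0 \<in> torsion m"
      using x0 by (simp add: torsion_def zscale_diff_right)
    then show "x \<in> (\<lambda>s. x0 + s) ` torsion m"
      by (rule rev_image_eqI) simp
  qed
  then show ?thesis
    using assms by (meson countable_image countable_subset)
qed simp

lemma countable_torsion_mult: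
  assumes "countable (torsion a :: 'a::ab_group_add set)" "countable (torsion b :: 'a set)"
  shows "countable (torsion (a * b) :: 'a set)"
proof -
  have "torsion (a * b) \<subseteq> (\<Union>t\<in>torsion a. {x::'a. zscale b x = t})"
    by (auto simp: torsion_def zscale_zscale[symmetric])
  moreover have "countable (\<Union>t\<in>torsion a. {x::'a. zscale b x = t})"
    using assms by (intro countable_UN countable_zscale_fibre)
  ultimately show ?thesis
    by (rule countable_subset)
qed

lemma torsion_one [simp]: "torsion 1 = {0}"
  by (simp add: torsion_def)

lemma torsion_uminus [simp]: "torsion (- m) = torsion m"
  by (simp add: torsion_def zscale_minus_left)

lemma countable_torsion:
  assumes "\<And>p. prime p \<Longrightarrow> countable (torsion p :: 'a::ab_group_add set)" "m \<noteq> 0"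
  shows "countable (torsion m :: 'a set)"
  using assms(2)
proof (induction m rule: prime_divisors_induct)
  case (unit m)
  then have "\<bar>m\<bar> = 1"
    by simp
  then have "m = 1 \<or> m = - 1"
    by arith
  then show ?case
    by (elim disjE) simp_all
next
  case (factor p m)
  then have "m \<noteq> 0"
    by simp
  then show ?case
    by (rule countable_torsion_mult[OF assms(1)[OF factor.hyps(1)] factor.IH])
qed simp

lemma zscale_eq_0_on_torsion_prime:
  assumes "prime p" "x \<in> torsion p" "zscale m x = 0" "\<not> p dvd m"
  shows "x = 0"
proof -
  have "coprime m p"
    using prime_imp_coprime[OF assms(1,4)] by (simp add: coprime_commute)
  then show ?thesis
    using assms(2,3) by (auto simp: torsion_def intro: zscale_eq_0_if_coprime)
qed

lemma inj_on_zscale_torsion_prime: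
  assumes "prime p"
  shows "inj_on (zscale m) {x \<in> torsion p. zscale m x \<noteq> 0}"
proof (rule inj_onI)
  fix x y assume x: "x \<in> {x \<in> torsion p. zscale m x \<noteq> 0}" and y: "y \<in> {x \<in> torsion p. zscale m x \<noteq> 0}"
    and eq: "zscale m x = zscale m y"
  have "\<not> p dvd m"
  proof
    assume "p dvd m"
    then have "zscale m x = zscale (m div p) (zscale p x)"
      by (simp add: zscale_zscale)
    also have "\<dots> = 0"
      using x by (simp add: torsion_def)
    finally show False
      using x by simp
  qed
  moreover have "x - y \<in> torsion p" "zscale m (x - y) = 0"
    using x y eq by (simp_all add: torsion_def zscale_diff_right)
  ultimately show "x = y"
    using zscale_eq_0_on_torsion_prime[OF assms] by fastforce
qed

section \<open>Topological abelian groups\<close>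

lemma tendsto_add_group:
  fixes f g :: "'b \<Rightarrow> 'a::{topological_space, ab_group_add}"
  assumes "topological_group_ax TYPE('a)" "(f \<longlongrightarrow> a) F" "(g \<longlongrightarrow> b) F"
  shows "((\<lambda>x. f x + g x) \<longlongrightarrow> a + b) F"
proof -
  have "continuous_on UNIV (\<lambda>z::'a \<times> 'a. fst z + snd z)"
    using assms(1) by (simp add: topological_group_ax_def)
  from continuous_on_tendsto_compose[OF this tendsto_Pair[OF assms(2,3)]] show ?thesis
    by simp
qed

lemma tendsto_minus_group:
  fixes f :: "'b \<Rightarrow> 'a::{topological_space, ab_group_add}"
  assumes "topological_group_ax TYPE('a)" "(f \<longlongrightarrow> a) F"
  shows "((\<lambda>x. - f x) \<longlongrightarrow> - a) F"
proof -
  have "continuous_on UNIV (uminus :: 'a \<Rightarrow> 'a)"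
    using assms(1) by (simp add: topological_group_ax_def)
  from continuous_on_tendsto_compose[OF this assms(2)] show ?thesis
    by simp
qed

lemma tendsto_zscale_group:
  fixes f :: "'b \<Rightarrow> 'a::{topological_space, ab_group_add}"
  assumes "topological_group_ax TYPE('a)" "(f \<longlongrightarrow> a) F"
  shows "((\<lambda>x. zscale m (f x)) \<longlongrightarrow> zscale m a) F"
proof -
  have nscale: "((\<lambda>x. nscale n (f x)) \<longlongrightarrow> nscale n a) F" for n
  proof (induction n)
    case (Suc n)
    then show ?case
      using tendsto_add_group[OF assms] by simp
  qed simp
  show ?thesis
    using tendsto_add_group[OF assms(1) nscale tendsto_minus_group[OF assms(1) nscale]]
    by (simp add: zscale_def)
qed

lemma continuous_on_zscale:
  assumes "topological_group_ax TYPE('a::{topological_space, ab_group_add})"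
  shows "continuous_on UNIV (zscale m :: 'a \<Rightarrow> 'a)"
  unfolding continuous_on_def
  using tendsto_zscale_group[OF assms tendsto_ident_at] by blast

lemma continuous_on_add_const:
  assumes "topological_group_ax TYPE('a::{topological_space, ab_group_add})"
  shows "continuous_on UNIV (\<lambda>x::'a. x + c)"
  unfolding continuous_on_def
  using tendsto_add_group[OF assms tendsto_ident_at tendsto_const] by blast

lemma zero_nbhd_halve:
  fixes W :: "'a::{topological_space, ab_group_add} set"
  assumes "topological_group_ax TYPE('a)" "open W" "0 \<in> W"
  obtains U where "open U" "0 \<in> U" "\<And>y z. y \<in> U \<Longrightarrow> z \<in> U \<Longrightarrow> y + z \<in> W"
proof -
  have "open ((\<lambda>z::'a \<times> 'a. fst z + snd z) -` W)"
    using assms(1,2) by (intro open_vimage) (simp_all add: topological_group_ax_def)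
  moreover have "(0, 0) \<in> (\<lambda>z::'a \<times> 'a. fst z + snd z) -` W"
    using assms(3) by simp
  ultimately obtain A B where "open A" "open B" "(0, 0) \<in> A \<times> B"
      "A \<times> B \<subseteq> (\<lambda>z::'a \<times> 'a. fst z + snd z) -` W"
    by (rule open_prod_elim)
  then show ?thesis
    by (intro that[of "A \<inter> B"]) auto
qed

definition uncountable_near_zero :: "'a::{topological_space, zero} set \<Rightarrow> bool" where
  "uncountable_near_zero H \<longleftrightarrow> (\<forall>U. open U \<longrightarrow> 0 \<in> U \<longrightarrow> uncountable (U \<inter> H))"

lemma uncountable_near_zero_subgroup:
  fixes H :: "'a::{second_countable_topology, ab_group_add} set"
  assumes "topological_group_ax TYPE('a)"
    and "\<And>x y. x \<in> H \<Longrightarrow> y \<in> H \<Longrightarrow> x - y \<in> H" "uncountable H"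
  shows "uncountable_near_zero H"
  unfolding uncountable_near_zero_def
proof (intro allI impI notI)
  fix U assume "open U" "0 \<in> U" and countable: "countable (U \<inter> H)"
  obtain \<B> :: "'a set set" where "countable \<B>" "topological_basis \<B>"
    using ex_countable_basis by blast
  \<comment> \<open>A point of \<open>H\<close> outside \<open>C\<close> has no basic neighbourhood meeting \<open>H\<close> countably,
    but the translate \<open>x + U\<close> of \<open>U\<close> meets \<open>H\<close> countably.\<close>
  define C where "C = (\<Union>b\<in>{b\<in>\<B>. countable (b \<inter> H)}. b \<inter> H)"
  have "countable C"
    unfolding C_def using \<open>countable \<B>\<close> by (intro countable_UN) auto
  then obtain x where x: "x \<in> H" "x \<notin> C"
    using assms(3) by (metis countable_subset subsetI)
  define V where "V = {z. z - x \<in> U}"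
  have "open V"
    unfolding V_def using open_vimage[OF \<open>open U\<close> continuous_on_add_const[OF assms(1), of "- x"]]
    by (simp add: vimage_def)
  moreover have "x \<in> V"
    using \<open>0 \<in> U\<close> by (simp add: V_def)
  ultimately obtain b where b: "b \<in> \<B>" "x \<in> b" "b \<subseteq> V"
    using topological_basisE[OF \<open>topological_basis \<B>\<close>] by metis
  have "b \<inter> H \<subseteq> (\<lambda>w. w + x) ` (U \<inter> H)"
  proof
    fix z assume "z \<in> b \<inter> H"
    then have "z - x \<in> U \<inter> H"
      using b(3) assms(2) x(1) by (auto simp: V_def)
    then show "z \<in> (\<lambda>w. w + x) ` (U \<inter> H)"
      by (rule rev_image_eqI) simp
  qed
  then have "countable (b \<inter> H)"
    using countable by (meson countable_image countable_subset)
  then have "x \<in> C"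
    using b x(1) unfolding C_def by blast
  with x(2) show False ..
qed

section \<open>Integer combinations of a sequence\<close>

definition lin_comb :: "(nat \<Rightarrow> 'a::ab_group_add) \<Rightarrow> (nat \<Rightarrow> int) \<Rightarrow> nat \<Rightarrow> 'a" where
  "lin_comb a n K = (\<Sum>i<K. zscale (n i) (a i))"

definition fact_bounded :: "nat \<Rightarrow> (nat \<Rightarrow> int) \<Rightarrow> bool" where
  "fact_bounded K n \<longleftrightarrow> (\<forall>i. \<bar>n i\<bar> \<le> int K * fact i)"

definition box_combs :: "(nat \<Rightarrow> 'a::ab_group_add) \<Rightarrow> nat \<Rightarrow> 'a set" where
  "box_combs a K = {lin_comb a n K | n. fact_bounded K n}"

definition int_span :: "(nat \<Rightarrow> 'a::ab_group_add) \<Rightarrow> nat \<Rightarrow> 'a set" where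
  "int_span a K = range (\<lambda>n. lin_comb a n K)"

text \<open>No nonzero element of \<open>box_combs a K\<close> lies within \<open>2 * sep_radius a K\<close> of \<open>0\<close>,
  and the cap \<open>(1/2) ^ K\<close> makes the radii tend to \<open>0\<close>.\<close>

definition sep_radius :: "(nat \<Rightarrow> 'a::{metric_space, ab_group_add}) \<Rightarrow> nat \<Rightarrow> real" where
  "sep_radius a K = Min (insert ((1/2) ^ K) ((\<lambda>s. dist s 0 / 2) ` (box_combs a K - {0})))"

lemma fact_bounded_mono: "fact_bounded K n \<Longrightarrow> K \<le> L \<Longrightarrow> fact_bounded L n"
  unfolding fact_bounded_def by (meson mult_right_mono of_nat_le_iff order_trans fact_ge_zero)

lemma lin_comb_cong:
  "(\<And>i. i < K \<Longrightarrow> a i = b i) \<Longrightarrow> (\<And>i. i < K \<Longrightarrow> n i = m i) \<Longrightarrow> lin_comb a n K = lin_comb b m K"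
  unfolding lin_comb_def by (rule sum.cong) auto

lemma lin_comb_restrict: "lin_comb a (restrict n {..<K}) K = lin_comb a n K"
  by (rule lin_comb_cong) auto

lemma lin_comb_add: "lin_comb a (\<lambda>i. x i + y i) K = lin_comb a x K + lin_comb a y K"
  by (simp add: lin_comb_def zscale_add_left sum.distrib)

lemma box_combs_cong: "(\<And>i. i < K \<Longrightarrow> a i = b i) \<Longrightarrow> box_combs a K = box_combs b K"
  unfolding box_combs_def by (metis lin_comb_cong)

lemma int_span_cong: "(\<And>i. i < K \<Longrightarrow> a i = b i) \<Longrightarrow> int_span a K = int_span b K"
  unfolding int_span_def by (metis lin_comb_cong)

lemma sep_radius_cong: "(\<And>i. i < K \<Longrightarrow> a i = b i) \<Longrightarrow> sep_radius a K = sep_radius b K"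
  unfolding sep_radius_def by (metis box_combs_cong)

lemma lin_comb_in_box_combs: "fact_bounded K n \<Longrightarrow> lin_comb a n K \<in> box_combs a K"
  unfolding box_combs_def by blast

lemma lin_comb_in_int_span: "lin_comb a n K \<in> int_span a K"
  unfolding int_span_def by blast

lemma zero_in_int_span: "0 \<in> int_span a K"
proof -
  have "lin_comb a (\<lambda>_. 0) K = 0"
    by (simp add: lin_comb_def)
  then show ?thesis
    by (metis lin_comb_in_int_span)
qed

lemma finite_box_combs: "finite (box_combs a K)"
proof (rule finite_subset)
  show "box_combs a K \<subseteq>
      (\<lambda>n. lin_comb a n K) ` PiE {..<K} (\<lambda>i. {- (int K * fact i) .. int K * fact i})"
  proof
    fix s assume "s \<in> box_combs a K"
    then obtain n where "s = lin_comb a n K" "fact_bounded K n"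
      unfolding box_combs_def by blast
    then show "s \<in> (\<lambda>n. lin_comb a n K) ` PiE {..<K} (\<lambda>i. {- (int K * fact i) .. int K * fact i})"
      by (intro image_eqI[of _ _ "restrict n {..<K}"])
         (auto simp: lin_comb_restrict fact_bounded_def abs_le_iff minus_le_iff)
  qed
qed (intro finite_imageI finite_PiE; simp)

lemma countable_int_span: "countable (int_span a K)"
proof (rule countable_subset)
  show "int_span a K \<subseteq> (\<lambda>n. lin_comb a n K) ` PiE {..<K} (\<lambda>_. UNIV)"
  proof
    fix s assume "s \<in> int_span a K"
    then obtain n where "s = lin_comb a n K"
      unfolding int_span_def by blast
    then show "s \<in> (\<lambda>n. lin_comb a n K) ` PiE {..<K} (\<lambda>_. UNIV)"
      by (intro image_eqI[of _ _ "restrict n {..<K}"]) (simp_all add: lin_comb_restrict)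
  qed
qed (intro countable_image countable_PiE; simp)

lemma sep_radius_pos: "sep_radius a K > 0"
  unfolding sep_radius_def using finite_box_combs by (subst Min_gr_iff) auto

lemma sep_radius_le: "sep_radius a K \<le> (1/2) ^ K"
  unfolding sep_radius_def using finite_box_combs by (intro Min_le) auto

lemma sep_radius_less_dist:
  assumes "s \<in> box_combs a K" "s \<noteq> 0"
  shows "sep_radius a K < dist s 0"
proof -
  have "sep_radius a K \<le> dist s 0 / 2"
    unfolding sep_radius_def using assms finite_box_combs by (intro Min_le) auto
  moreover have "dist s 0 > 0"
    using assms(2) by simp
  ultimately show ?thesis
    by linarith
qed

lemma lin_comb_eq_0_imp_zscale_eq_0:
  assumes independent: "\<And>k m. zscale m (a k) \<in> int_span a k \<Longrightarrow> zscale m (a k) = 0"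
    and "lin_comb a n K = 0" "i < K"
  shows "zscale (n i) (a i) = 0"
  using assms(2,3)
proof (induction K)
  case (Suc K)
  have sum: "lin_comb a n K + zscale (n K) (a K) = 0"
    using Suc.prems(1) by (simp add: lin_comb_def)
  then have "zscale (n K) (a K) = lin_comb a (\<lambda>i. - n i) K"
    by (simp add: lin_comb_def zscale_minus_left sum_negf eq_neg_iff_add_eq_0 add.commute)
  then have "zscale (n K) (a K) = 0"
    using independent lin_comb_in_int_span by metis
  with Suc sum show ?case
    using less_Suc_eq by auto
qed simp

section \<open>Box-stable sequences\<close>

lemma eventually_two_half_power_less:
  assumes "e > 0"
  shows "eventually (\<lambda>K. 2 * (1/2::real) ^ K < e) sequentially"
proof -
  have "(\<lambda>K. 2 * (1/2::real) ^ K) \<longlonglongrightarrow> 0"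
    by (intro tendsto_mult_right_zero LIMSEQ_power_zero) simp
  then show ?thesis
    using assms by (rule order_tendstoD(2))
qed

definition box_stable :: "(nat \<Rightarrow> 'a::{metric_space, ab_group_add}) \<Rightarrow> bool" where
  "box_stable a \<longleftrightarrow> (\<forall>n K N. fact_bounded K n \<longrightarrow> K \<le> N \<longrightarrow>
      dist (lin_comb a n N) (lin_comb a n K) < sep_radius a K)"

definition lin_comb_limit :: "(nat \<Rightarrow> 'a::{metric_space, ab_group_add}) \<Rightarrow> (nat \<Rightarrow> int) \<Rightarrow> 'a" where
  "lin_comb_limit a n = lim (\<lambda>N. lin_comb a n N)"

lemma box_stable_LIMSEQ:
  fixes a :: "nat \<Rightarrow> 'a::{complete_space, ab_group_add}"
  assumes "box_stable a" "fact_bounded K n"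
  shows "(\<lambda>N. lin_comb a n N) \<longlonglongrightarrow> lin_comb_limit a n"
proof -
  have "Cauchy (\<lambda>N. lin_comb a n N)"
  proof (rule metric_CauchyI)
    fix e :: real assume "0 < e"
    then obtain L where L: "\<And>M. M \<ge> L \<Longrightarrow> 2 * (1/2::real) ^ M < e"
      using eventually_two_half_power_less unfolding eventually_sequentially by blast
    define M where "M = max K L"
    have "fact_bounded M n"
      using assms(2) fact_bounded_mono by (auto simp: M_def)
    then have near: "dist (lin_comb a n m) (lin_comb a n M) < sep_radius a M" if "M \<le> m" for m
      using assms(1) that unfolding box_stable_def by blast
    have "2 * sep_radius a M < e"
      using sep_radius_le[of a M] L[of M] by (simp add: M_def)
    then have "dist (lin_comb a n m) (lin_comb a n m') < e" if "M \<le> m" "M \<le> m'" for m m'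
      using near[OF that(1)] near[OF that(2)]
        dist_triangle2[of "lin_comb a n m" "lin_comb a n m'" "lin_comb a n M"]
      by linarith
    then show "\<exists>M. \<forall>m\<ge>M. \<forall>m'\<ge>M. dist (lin_comb a n m) (lin_comb a n m') < e"
      by blast
  qed
  then show ?thesis
    by (simp add: lin_comb_limit_def Cauchy_convergent_iff convergent_LIMSEQ_iff)
qed

lemma box_stable_dist_limit:
  fixes a :: "nat \<Rightarrow> 'a::{complete_space, ab_group_add}"
  assumes "box_stable a" "fact_bounded K n"
  shows "dist (lin_comb_limit a n) (lin_comb a n K) \<le> sep_radius a K"
proof -
  have "eventually (\<lambda>N. dist (lin_comb a n K) (lin_comb a n N) \<le> sep_radius a K) sequentially"
    using assms unfolding box_stable_def eventually_sequentially
    by (metis dist_commute less_imp_le)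
  then have "dist (lin_comb a n K) (lin_comb_limit a n) \<le> sep_radius a K"
    by (rule Lim_dist_ubound[OF trivial_limit_sequentially box_stable_LIMSEQ[OF assms]])
  then show ?thesis
    by (simp add: dist_commute)
qed

lemma box_stable_limit_eq_0:
  fixes a :: "nat \<Rightarrow> 'a::{complete_space, ab_group_add}"
  assumes "box_stable a" "fact_bounded K n" "lin_comb_limit a n = 0"
  shows "lin_comb a n K = 0"
proof (rule ccontr)
  assume "lin_comb a n K \<noteq> 0"
  then have "sep_radius a K < dist (lin_comb a n K) 0"
    using sep_radius_less_dist lin_comb_in_box_combs[OF assms(2)] by blast
  with box_stable_dist_limit[OF assms(1,2)] assms(3) show False
    by (simp add: dist_commute)
qed

lemma box_stable_limit_close:
  fixes a :: "nat \<Rightarrow> 'a::{complete_space, ab_group_add}"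
  assumes "box_stable a" "fact_bounded K x" "fact_bounded K y" "\<And>i. i < K \<Longrightarrow> x i = y i"
  shows "dist (lin_comb_limit a x) (lin_comb_limit a y) \<le> 2 * (1/2) ^ K"
proof -
  have "lin_comb a x K = lin_comb a y K"
    using assms(4) by (intro lin_comb_cong) auto
  then have "dist (lin_comb_limit a x) (lin_comb_limit a y) \<le> sep_radius a K + sep_radius a K"
    using box_stable_dist_limit[OF assms(1,2)] box_stable_dist_limit[OF assms(1,3)]
      dist_triangle2[of "lin_comb_limit a x" "lin_comb_limit a y" "lin_comb a x K"]
    by simp
  then show ?thesis
    using sep_radius_le[of a K] by simp
qed

lemma lin_comb_limit_add:
  fixes a :: "nat \<Rightarrow> 'a::{complete_space, ab_group_add}"
  assumes "topological_group_ax TYPE('a)" "box_stable a" "fact_bounded K x" "fact_bounded L y"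
    and "\<And>N. lin_comb a z N = lin_comb a x N + lin_comb a y N"
  shows "lin_comb_limit a z = lin_comb_limit a x + lin_comb_limit a y"
proof -
  have "(\<lambda>N. lin_comb a z N) \<longlonglongrightarrow> lin_comb_limit a x + lin_comb_limit a y"
    using tendsto_add_group[OF assms(1) box_stable_LIMSEQ[OF assms(2,3)] box_stable_LIMSEQ[OF assms(2,4)]]
    by (simp add: assms(5))
  then show ?thesis
    unfolding lin_comb_limit_def by (rule limI)
qed

lemma lin_comb_limit_eq_0_imp_zscale_eq_0:
  fixes a :: "nat \<Rightarrow> 'a::{complete_space, ab_group_add}"
  assumes "box_stable a" "\<And>k m. zscale m (a k) \<in> int_span a k \<Longrightarrow> zscale m (a k) = 0"
    and "fact_bounded K n" "lin_comb_limit a n = 0"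
  shows "zscale (n i) (a i) = 0"
proof -
  have "fact_bounded (max K (Suc i)) n"
    using assms(3) fact_bounded_mono by auto
  then have "lin_comb a n (max K (Suc i)) = 0"
    using box_stable_limit_eq_0[OF assms(1) _ assms(4)] by blast
  then show ?thesis
    using lin_comb_eq_0_imp_zscale_eq_0[of a, OF assms(2)] by auto
qed

definition stable_nbhd :: "(nat \<Rightarrow> 'a::{metric_space, ab_group_add}) \<Rightarrow> nat \<Rightarrow> 'a set" where
  "stable_nbhd a K = {w. \<forall>s\<in>box_combs a K. dist (s + w) s < sep_radius a K}"

lemma open_stable_nbhd:
  assumes "topological_group_ax TYPE('a::{metric_space, ab_group_add})"
  shows "open (stable_nbhd a K :: 'a set)"
proof -
  have "stable_nbhd a K = (\<Inter>s\<in>box_combs a K. (\<lambda>w. w + s) -` ball s (sep_radius a K))"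
    by (auto simp: stable_nbhd_def dist_commute add.commute)
  then show ?thesis
    by (simp add: open_INT finite_box_combs open_vimage[OF open_ball continuous_on_add_const[OF assms]])
qed

lemma zero_in_stable_nbhd: "0 \<in> stable_nbhd a K"
  by (simp add: stable_nbhd_def sep_radius_pos)

lemma stable_nbhd_cong: "(\<And>i. i < K \<Longrightarrow> a i = b i) \<Longrightarrow> stable_nbhd a K = stable_nbhd b K"
  unfolding stable_nbhd_def by (metis box_combs_cong sep_radius_cong)

lemma box_stable_if_nested_nbhds:
  fixes a :: "nat \<Rightarrow> 'a::{metric_space, ab_group_add}"
  assumes "\<And>K. 0 \<in> W K" "\<And>K. W K \<subseteq> stable_nbhd a K"
    and "\<And>K y m. y \<in> W (Suc K) \<Longrightarrow> \<bar>m\<bar> \<le> int K * fact K \<Longrightarrow> zscale m (a K) + y \<in> W K"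
  shows "box_stable a"
  unfolding box_stable_def
proof (intro allI impI)
  fix n K N assume n: "fact_bounded K n" and "K \<le> N"
  have tail: "(\<Sum>i\<in>{J..<J + l}. zscale (n i) (a i)) \<in> W J" if "K \<le> J" for J l
    using that
  proof (induction l arbitrary: J)
    case (Suc l)
    have split: "(\<Sum>i\<in>{J..<J + Suc l}. zscale (n i) (a i))
        = zscale (n J) (a J) + (\<Sum>i\<in>{Suc J..<Suc J + l}. zscale (n i) (a i))"
      by (subst sum.atLeast_Suc_lessThan) auto
    have "(\<Sum>i\<in>{Suc J..<Suc J + l}. zscale (n i) (a i)) \<in> W (Suc J)"
      using Suc.prems by (intro Suc.IH) simp
    moreover have "\<bar>n J\<bar> \<le> int J * fact J"
      using fact_bounded_mono[OF n Suc.prems] by (simp add: fact_bounded_def)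
    ultimately show ?case
      unfolding split by (rule assms(3))
  qed (simp add: assms(1))
  have "lin_comb a n N = lin_comb a n K + (\<Sum>i\<in>{K..<K + (N - K)}. zscale (n i) (a i))"
    unfolding lin_comb_def using \<open>K \<le> N\<close>
    by (simp add: atLeast0LessThan[symmetric] sum.atLeastLessThan_concat)
  moreover have "lin_comb a n K \<in> box_combs a K"
    using n by (rule lin_comb_in_box_combs)
  ultimately show "dist (lin_comb a n N) (lin_comb a n K) < sep_radius a K"
    using tail[of K "N - K"] assms(2) by (auto simp: stable_nbhd_def)
qed

lemma exists_next_term:
  fixes H E W :: "'a::{metric_space, ab_group_add} set"
  assumes "topological_group_ax TYPE('a)" "uncountable_near_zero H"
    and "countable (H \<inter> E)" "open W" "0 \<in> W"
  shows "\<exists>x W'. x \<in> H - E \<and> open W' \<and> 0 \<in> W' \<and> W' \<subseteq> stable_nbhd (a(K := x)) (Suc K) \<and>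
    (\<forall>y\<in>W'. \<forall>m. \<bar>m\<bar> \<le> int K * fact K \<longrightarrow> zscale m x + y \<in> W)"
proof -
  obtain U where U: "open U" "0 \<in> U" "\<And>y z. y \<in> U \<Longrightarrow> z \<in> U \<Longrightarrow> y + z \<in> W"
    using zero_nbhd_halve[OF assms(1,4,5)] by blast
  define M where "M = (\<Inter>m\<in>{- (int K * fact K) .. int K * fact K}. zscale m -` U)"
  have "open M"
    unfolding M_def using open_vimage[OF U(1) continuous_on_zscale[OF assms(1)]] by auto
  moreover have "0 \<in> M"
    using U(2) by (simp add: M_def)
  ultimately have "uncountable (M \<inter> H)"
    using assms(2) by (simp add: uncountable_near_zero_def)
  then have "\<not> M \<inter> H \<subseteq> H \<inter> E"
    using assms(3) countable_subset by blast
  then obtain x where x: "x \<in> M" "x \<in> H - E"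
    by blast
  define W' where "W' = U \<inter> stable_nbhd (a(K := x)) (Suc K)"
  have "open W'" "0 \<in> W'"
    unfolding W'_def using U(1,2) open_stable_nbhd[OF assms(1)] zero_in_stable_nbhd by auto
  moreover have "W' \<subseteq> stable_nbhd (a(K := x)) (Suc K)"
    by (simp add: W'_def)
  moreover have "zscale m x + y \<in> W" if "y \<in> W'" "\<bar>m\<bar> \<le> int K * fact K" for y m
  proof (rule U(3))
    show "zscale m x \<in> U"
      using x(1) that(2) by (auto simp: M_def abs_le_iff minus_le_iff)
    show "y \<in> U"
      using that(1) by (simp add: W'_def)
  qed
  ultimately show ?thesis
    using x(2) by blast
qed

lemma fun_upd_chain_diagonal:
  assumes "\<And>K. b (Suc K) = (b K)(K := b (Suc K) K)" "i < K"
  shows "b K i = b (Suc i) i"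
  using assms(2)
proof (induction K)
  case (Suc K)
  show ?case
  proof (cases "i = K")
    case False
    then have "b (Suc K) i = b K i"
      using assms(1)[of K] by (metis fun_upd_other)
    with False Suc show ?thesis
      by simp
  qed simp
qed simp

lemma exists_seq_nested_nbhds:
  fixes H :: "'a::{metric_space, ab_group_add} set"
  assumes "topological_group_ax TYPE('a)" "uncountable_near_zero H"
    and "\<And>G. countable G \<Longrightarrow> countable (H \<inter> E G)"
  shows "\<exists>a W. (\<forall>k. a k \<in> H - E (int_span a k)) \<and> (\<forall>K. 0 \<in> W K \<and> W K \<subseteq> stable_nbhd a K) \<and>
    (\<forall>K y m. y \<in> W (Suc K) \<longrightarrow> \<bar>m\<bar> \<le> int K * fact K \<longrightarrow> zscale m (a K) + y \<in> W K)"
proof -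
  \<comment> \<open>The state of the recursion is the sequence chosen so far, of which only the first \<open>K\<close>
    terms matter, together with the current neighbourhood.\<close>
  define P where "P K bW \<longleftrightarrow> open (snd bW) \<and> 0 \<in> snd bW \<and> snd bW \<subseteq> stable_nbhd (fst bW) K"
    for K and bW :: "(nat \<Rightarrow> 'a) \<times> 'a set"
  define Q where "Q K bW bW' \<longleftrightarrow> fst bW' = (fst bW)(K := fst bW' K) \<and>
      fst bW' K \<in> H - E (int_span (fst bW) K) \<and>
      (\<forall>y\<in>snd bW'. \<forall>m. \<bar>m\<bar> \<le> int K * fact K \<longrightarrow> zscale m (fst bW' K) + y \<in> snd bW)"
    for K and bW bW' :: "(nat \<Rightarrow> 'a) \<times> 'a set"
  have "P 0 (\<lambda>_. 0, stable_nbhd (\<lambda>_. 0) 0)"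
    by (simp add: P_def open_stable_nbhd[OF assms(1)] zero_in_stable_nbhd)
  moreover have "\<exists>bW'. P (Suc K) bW' \<and> Q K bW bW'" if "P K bW" for K bW
  proof -
    from that have "open (snd bW)" "0 \<in> snd bW"
      by (simp_all add: P_def)
    then obtain x W' where "x \<in> H - E (int_span (fst bW) K)" "open W'" "0 \<in> W'"
        "W' \<subseteq> stable_nbhd ((fst bW)(K := x)) (Suc K)"
        "\<forall>y\<in>W'. \<forall>m. \<bar>m\<bar> \<le> int K * fact K \<longrightarrow> zscale m x + y \<in> snd bW"
      using exists_next_term[where a = "fst bW" and K = K,
          OF assms(1,2) assms(3)[OF countable_int_span]]
      by blast
    then have "P (Suc K) ((fst bW)(K := x), W') \<and> Q K bW ((fst bW)(K := x), W')"
      by (simp add: P_def Q_def)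
    then show ?thesis ..
  qed
  ultimately obtain f where f: "\<And>K. P K (f K) \<and> Q K (f K) (f (Suc K))"
    using dependent_nat_choice[of P Q] by blast
  define a where "a k = fst (f (Suc k)) k" for k
  have prefix: "i < K \<Longrightarrow> fst (f K) i = a i" for i K
    unfolding a_def using f by (intro fun_upd_chain_diagonal[of "\<lambda>K. fst (f K)"]) (simp add: Q_def)
  have next_term: "a k \<in> H - E (int_span (fst (f k)) k)" for k
    using f[of k] by (simp add: Q_def a_def)
  show ?thesis
  proof (intro exI[of _ a] exI[of _ "\<lambda>K. snd (f K)"] conjI allI impI)
    show "a k \<in> H - E (int_span a k)" for k
      using next_term[of k] int_span_cong[of k "fst (f k)" a] prefix by simp
    show "0 \<in> snd (f K)" "snd (f K) \<subseteq> stable_nbhd a K" for K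
      using f[of K] stable_nbhd_cong[of K "fst (f K)" a] prefix by (simp_all add: P_def)
    show "zscale m (a K) + y \<in> snd (f K)"
      if "y \<in> snd (f (Suc K))" "\<bar>m\<bar> \<le> int K * fact K" for K y m
      using f[of K] that by (simp add: Q_def a_def)
  qed
qed

lemma exists_box_stable_seq:
  fixes H :: "'a::{metric_space, ab_group_add} set"
  assumes "topological_group_ax TYPE('a)" "uncountable_near_zero H"
    and "\<And>G. countable G \<Longrightarrow> countable (H \<inter> E G)"
  obtains a where "box_stable a" "\<And>k. a k \<in> H - E (int_span a k)"
proof -
  obtain a W where a: "\<forall>k. a k \<in> H - E (int_span a k)"
    and W: "\<forall>K. 0 \<in> W K \<and> W K \<subseteq> stable_nbhd a K"
      "\<forall>K y m. y \<in> W (Suc K) \<longrightarrow> \<bar>m\<bar> \<le> int K * fact K \<longrightarrow> zscale m (a K) + y \<in> W K"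
    using exists_seq_nested_nbhds[OF assms] by iprover
  have "box_stable a"
  proof (rule box_stable_if_nested_nbhds)
    show "0 \<in> W K" "W K \<subseteq> stable_nbhd a K" for K
      using W(1) by blast+
    show "zscale m (a K) + y \<in> W K" if "y \<in> W (Suc K)" "\<bar>m\<bar> \<le> int K * fact K" for K y m
      using W(2) that by blast
  qed
  then show ?thesis
    by (rule that) (use a in blast)
qed

section \<open>Embedding \<open>\<ell>\<^sup>1(\<int>)\<close>\<close>

lemma ell1Z_fact_bounded:
  assumes "x \<in> ell1Z"
  obtains K where "fact_bounded K x"
proof
  let ?f = "\<lambda>k. real_of_int \<bar>x k\<bar> / fact k"
  define K where "K = nat \<lceil>suminf ?f\<rceil>"
  show "fact_bounded K x"
    unfolding fact_bounded_def
  proof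
    fix i
    have "?f i \<le> suminf ?f"
      using sum_le_suminf[of ?f "{i}"] assms by (simp add: ell1Z_def)
    also have "\<dots> \<le> real K"
      unfolding K_def by (rule real_nat_ceiling_ge)
    finally have "real_of_int \<bar>x i\<bar> \<le> real_of_int (int K * fact i)"
      by (simp add: divide_le_eq)
    then show "\<bar>x i\<bar> \<le> int K * fact i"
      by (simp only: of_int_le_iff)
  qed
qed

lemma ell1Z_diff:
  assumes "x \<in> ell1Z" "y \<in> ell1Z"
  shows "(\<lambda>k. x k - y k) \<in> ell1Z"
  unfolding ell1Z_def mem_Collect_eq
proof (rule summable_comparison_test)
  show "summable (\<lambda>k. real_of_int \<bar>x k\<bar> / fact k + real_of_int \<bar>y k\<bar> / fact k)"
    using assms by (intro summable_add) (simp_all add: ell1Z_def)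
  show "\<exists>N. \<forall>k\<ge>N. norm (real_of_int \<bar>x k - y k\<bar> / fact k)
      \<le> real_of_int \<bar>x k\<bar> / fact k + real_of_int \<bar>y k\<bar> / fact k"
    by (intro exI[of _ 0] allI impI) (simp add: add_divide_distrib[symmetric] divide_right_mono)
qed

lemma ell1Z_coordinate_le_norm:
  assumes "x \<in> ell1Z"
  shows "real_of_int \<bar>x i\<bar> / fact i \<le> ell1_norm x"
  using sum_le_suminf[of "\<lambda>k. real_of_int \<bar>x k\<bar> / fact k" "{i}"] assms
  by (simp add: ell1Z_def ell1_norm_def)

lemma ell1Z_near_coordinates:
  assumes "x \<in> ell1Z" "y \<in> ell1Z" "ell1_norm (\<lambda>k. y k - x k) < 1 / fact K"
  shows "i < K \<Longrightarrow> y i = x i" and "\<bar>y i - x i\<bar> < fact i"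
proof -
  have "real_of_int \<bar>y j - x j\<bar> / fact j < 1 / fact K" for j
    using ell1Z_coordinate_le_norm[OF ell1Z_diff[OF assms(2,1)], of j] assms(3) by simp
  then have coord: "real_of_int \<bar>y j - x j\<bar> * fact K < fact j" for j
    by (simp add: field_simps)
  show "y i = x i" if "i < K"
  proof -
    have "(fact i :: real) \<le> fact K"
      using that by (intro fact_mono) simp
    then have "real_of_int \<bar>y i - x i\<bar> * fact K < 1 * fact K"
      using coord[of i] by linarith
    then have "real_of_int \<bar>y i - x i\<bar> < 1"
      by (rule mult_right_less_imp_less) simp
    then show ?thesis
      by simp
  qed
  have "real_of_int \<bar>y i - x i\<bar> * 1 \<le> real_of_int \<bar>y i - x i\<bar> * fact K"
    by (intro mult_left_mono fact_ge_1) simp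
  then have "real_of_int \<bar>y i - x i\<bar> < real_of_int (fact i)"
    using coord[of i] by simp
  then show "\<bar>y i - x i\<bar> < fact i"
    by (simp only: of_int_less_iff)
qed

lemma lin_comb_limit_ell1Z_continuous:
  fixes a :: "nat \<Rightarrow> 'a::{complete_space, ab_group_add}"
  assumes "box_stable a" "x \<in> ell1Z" "e > 0"
  obtains d where "d > 0" "\<And>y. y \<in> ell1Z \<Longrightarrow> ell1_norm (\<lambda>k. y k - x k) < d \<Longrightarrow>
    dist (lin_comb_limit a x) (lin_comb_limit a y) < e"
proof -
  obtain Kx where Kx: "fact_bounded Kx x"
    using ell1Z_fact_bounded[OF assms(2)] .
  obtain N where N: "\<And>K. K \<ge> N \<Longrightarrow> 2 * (1/2::real) ^ K < e"
    using eventually_two_half_power_less[OF assms(3)] unfolding eventually_sequentially by blast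
  define K where "K = max (Suc Kx) N"
  show ?thesis
  proof (rule that[of "1 / fact K"])
    fix y assume y: "y \<in> ell1Z" and near: "ell1_norm (\<lambda>k. y k - x k) < 1 / fact K"
    note coordinates = ell1Z_near_coordinates[OF assms(2) y near]
    have "fact_bounded K y"
      unfolding fact_bounded_def
    proof
      fix i
      have "\<bar>x i\<bar> \<le> int Kx * fact i"
        using Kx by (simp add: fact_bounded_def)
      moreover have "int Kx * fact i + fact i \<le> int K * fact i"
        using mult_right_mono[of "int (Suc Kx)" "int K" "fact i"] by (simp add: K_def algebra_simps)
      ultimately show "\<bar>y i\<bar> \<le> int K * fact i"
        using coordinates(2)[of i] by linarith
    qed
    moreover have "fact_bounded K x"
      using Kx by (rule fact_bounded_mono) (simp add: K_def)
    ultimately have "dist (lin_comb_limit a x) (lin_comb_limit a y) \<le> 2 * (1/2) ^ K"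
      by (intro box_stable_limit_close[OF assms(1)]) (simp_all add: coordinates(1))
    also have "\<dots> < e"
      using N by (simp add: K_def)
    finally show "dist (lin_comb_limit a x) (lin_comb_limit a y) < e" .
  qed simp
qed

lemma lin_comb_limit_ell1Z_add:
  fixes a :: "nat \<Rightarrow> 'a::{complete_space, ab_group_add}"
  assumes "topological_group_ax TYPE('a)" "box_stable a" "x \<in> ell1Z" "y \<in> ell1Z"
  shows "lin_comb_limit a (\<lambda>k. x k + y k) = lin_comb_limit a x + lin_comb_limit a y"
proof -
  obtain Kx Ky where "fact_bounded Kx x" "fact_bounded Ky y"
    using ell1Z_fact_bounded[OF assms(3)] ell1Z_fact_bounded[OF assms(4)] by metis
  then show ?thesis
    by (rule lin_comb_limit_add[OF assms(1,2)]) (rule lin_comb_add)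
qed

lemma inj_on_lin_comb_limit_ell1Z:
  fixes a :: "nat \<Rightarrow> 'a::{complete_space, ab_group_add}"
  assumes "topological_group_ax TYPE('a)" "box_stable a"
    and independent: "\<And>k m. zscale m (a k) \<in> int_span a k \<Longrightarrow> m = 0"
  shows "inj_on (lin_comb_limit a) ell1Z"
proof (rule inj_onI)
  fix x y assume x: "x \<in> ell1Z" and y: "y \<in> ell1Z" and eq: "lin_comb_limit a x = lin_comb_limit a y"
  define z where "z k = x k - y k" for k
  have z: "z \<in> ell1Z"
    unfolding z_def using x y by (rule ell1Z_diff)
  then obtain Kz where "fact_bounded Kz z"
    by (rule ell1Z_fact_bounded)
  have "lin_comb_limit a x = lin_comb_limit a z + lin_comb_limit a y"
    using lin_comb_limit_ell1Z_add[OF assms(1,2) z y] by (simp add: z_def)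
  with eq have "lin_comb_limit a z = 0"
    by simp
  moreover have "zscale m (a k) = 0" if "zscale m (a k) \<in> int_span a k" for k m
    using independent[OF that] by simp
  ultimately have "zscale (z i) (a i) = 0" for i
    using lin_comb_limit_eq_0_imp_zscale_eq_0[OF assms(2) _ \<open>fact_bounded Kz z\<close>] by blast
  then have "z i = 0" for i
    using independent zero_in_int_span by metis
  then show "x = y"
    by (auto simp: z_def)
qed

lemma ell1Z_embeds_if_box_stable:
  fixes a :: "nat \<Rightarrow> 'a::{complete_space, ab_group_add}"
  assumes "topological_group_ax TYPE('a)" "box_stable a"
    and "\<And>k m. zscale m (a k) \<in> int_span a k \<Longrightarrow> m = 0"
  shows "ell1Z_embeds TYPE('a)"
  unfolding ell1Z_embeds_def
proof (intro exI[of _ "lin_comb_limit a"] conjI ballI allI impI)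
  show "lin_comb_limit a (\<lambda>k. x k + y k) = lin_comb_limit a x + lin_comb_limit a y"
    if "x \<in> ell1Z" "y \<in> ell1Z" for x y
    using that by (rule lin_comb_limit_ell1Z_add[OF assms(1,2)])
  show "inj_on (lin_comb_limit a) ell1Z"
    by (rule inj_on_lin_comb_limit_ell1Z[OF assms])
  fix x U assume x: "x \<in> ell1Z" and U: "open U \<and> lin_comb_limit a x \<in> U"
  then obtain e where "e > 0" "ball (lin_comb_limit a x) e \<subseteq> U"
    using openE by blast
  with lin_comb_limit_ell1Z_continuous[OF assms(2) x \<open>e > 0\<close>]
  show "\<exists>d>0. \<forall>y\<in>ell1Z. ell1_norm (\<lambda>k. y k - x k) < d \<longrightarrow> lin_comb_limit a y \<in> U"
    by (metis mem_ball subsetD)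
qed

section \<open>Embedding \<open>(\<int>/p\<int>)\<^sup>\<nat>\<close>\<close>

lemma ZpN_fact_bounded:
  assumes "x \<in> ZpN p"
  shows "fact_bounded (nat p) x"
  unfolding fact_bounded_def
proof
  fix i
  have "0 \<le> x i" "x i < p"
    using assms by (auto simp: ZpN_def PiE_def Pi_def)
  then have "\<bar>x i\<bar> \<le> int (nat p)"
    by simp
  also have "\<dots> \<le> int (nat p) * fact i"
    by (simp add: mult_le_cancel_left1)
  finally show "\<bar>x i\<bar> \<le> int (nat p) * fact i" .
qed

lemma topspace_ZpN_topology [simp]: "topspace (ZpN_topology p) = ZpN p"
  by (simp add: ZpN_topology_def ZpN_def)

lemma openin_ZpN_cylinder:
  assumes "x \<in> ZpN p"
  shows "openin (ZpN_topology p) {y \<in> ZpN p. \<forall>i<K. y i = x i}"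
proof -
  define S where "S i = (if i < K then {x i} else {0..<p})" for i
  have "{y \<in> ZpN p. \<forall>i<K. y i = x i} = PiE UNIV S"
    using assms by (auto simp: S_def ZpN_def PiE_def Pi_def)
  moreover have "finite {i. S i \<noteq> {0..<p}}"
    by (rule finite_subset[of _ "{..<K}"]) (auto simp: S_def)
  moreover have "S i \<subseteq> {0..<p}" for i
    using assms by (auto simp: S_def ZpN_def PiE_def Pi_def)
  ultimately show ?thesis
    by (simp add: ZpN_topology_def openin_PiE_gen)
qed

lemma continuous_map_lin_comb_limit_ZpN:
  fixes a :: "nat \<Rightarrow> 'a::{complete_space, ab_group_add}"
  assumes "box_stable a"
  shows "continuous_map (ZpN_topology p) euclidean (lin_comb_limit a)"
  unfolding continuous_map_def
proof (intro conjI allI impI)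
  fix U :: "'a set" assume "openin euclidean U"
  show "openin (ZpN_topology p) {x \<in> topspace (ZpN_topology p). lin_comb_limit a x \<in> U}"
  proof (subst openin_subopen, intro ballI)
    fix x assume "x \<in> {x \<in> topspace (ZpN_topology p). lin_comb_limit a x \<in> U}"
    then have x: "x \<in> ZpN p" "lin_comb_limit a x \<in> U"
      by auto
    obtain e where "e > 0" and e: "ball (lin_comb_limit a x) e \<subseteq> U"
      using \<open>openin euclidean U\<close> x(2) openE by auto
    obtain N where N: "\<And>K. K \<ge> N \<Longrightarrow> 2 * (1/2::real) ^ K < e"
      using eventually_two_half_power_less[OF \<open>e > 0\<close>] unfolding eventually_sequentially by blast
    define K where "K = max (nat p) N"
    have "lin_comb_limit a y \<in> U" if "y \<in> ZpN p" "\<forall>i<K. y i = x i" for y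
    proof -
      have "fact_bounded K x" "fact_bounded K y"
        using ZpN_fact_bounded[OF x(1)] ZpN_fact_bounded[OF that(1)] fact_bounded_mono
        by (auto simp: K_def)
      then have "dist (lin_comb_limit a x) (lin_comb_limit a y) \<le> 2 * (1/2) ^ K"
        using box_stable_limit_close[OF assms] that(2) by metis
      also have "\<dots> < e"
        using N by (simp add: K_def)
      finally show ?thesis
        using e by auto
    qed
    then show "\<exists>T. openin (ZpN_topology p) T \<and> x \<in> T \<and>
        T \<subseteq> {x \<in> topspace (ZpN_topology p). lin_comb_limit a x \<in> U}"
      using openin_ZpN_cylinder[OF x(1), of K] x(1) by (intro exI[of _ "{y \<in> ZpN p. \<forall>i<K. y i = x i}"]) auto
  qed
qed simp

lemma lin_comb_ZpN_add:
  assumes "\<And>i. a i \<in> torsion p"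
  shows "lin_comb a (ZpN_add p x y) N = lin_comb a x N + lin_comb a y N"
  using assms by (simp add: lin_comb_def ZpN_add_def torsion_def zscale_mod zscale_add_left sum.distrib)

lemma lin_comb_limit_ZpN_add:
  fixes a :: "nat \<Rightarrow> 'a::{complete_space, ab_group_add}"
  assumes "topological_group_ax TYPE('a)" "box_stable a" "\<And>i. a i \<in> torsion p"
    and "x \<in> ZpN p" "y \<in> ZpN p"
  shows "lin_comb_limit a (ZpN_add p x y) = lin_comb_limit a x + lin_comb_limit a y"
  using ZpN_fact_bounded[OF assms(4)] ZpN_fact_bounded[OF assms(5)]
  by (rule lin_comb_limit_add[OF assms(1,2)]) (rule lin_comb_ZpN_add[OF assms(3)])

lemma inj_on_lin_comb_limit_ZpN:
  fixes a :: "nat \<Rightarrow> 'a::{complete_space, ab_group_add}"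
  assumes "topological_group_ax TYPE('a)" "prime p" "box_stable a"
    and nonzero: "\<And>k. a k \<noteq> 0" and torsion: "\<And>k. a k \<in> torsion p"
    and independent: "\<And>k m. zscale m (a k) \<in> int_span a k \<Longrightarrow> zscale m (a k) = 0"
  shows "inj_on (lin_comb_limit a) (ZpN p)"
proof (rule inj_onI)
  fix x y assume x: "x \<in> ZpN p" and y: "y \<in> ZpN p" and eq: "lin_comb_limit a x = lin_comb_limit a y"
  define z where "z k = (x k - y k) mod p" for k
  have z: "z \<in> ZpN p"
    using prime_gt_0_int[OF assms(2)] by (simp add: ZpN_def PiE_UNIV_domain z_def)
  have x_eq: "ZpN_add p z y = x"
    using x by (auto simp: ZpN_add_def z_def ZpN_def PiE_def Pi_def mod_add_left_eq)
  have "lin_comb_limit a z = 0"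
    using lin_comb_limit_ZpN_add[OF assms(1,3) torsion z y] eq by (simp add: x_eq)
  have "z k = 0" for k
  proof (rule ccontr)
    assume "z k \<noteq> 0"
    moreover have "0 \<le> z k" "z k < p"
      using z by (auto simp: ZpN_def PiE_def Pi_def)
    ultimately have "\<not> p dvd z k"
      using zdvd_not_zless by fastforce
    moreover have "zscale (z k) (a k) = 0"
      using lin_comb_limit_eq_0_imp_zscale_eq_0[OF assms(3) independent ZpN_fact_bounded[OF z]]
        \<open>lin_comb_limit a z = 0\<close> by blast
    ultimately have "a k = 0"
      using zscale_eq_0_on_torsion_prime[OF assms(2) torsion] by blast
    with nonzero show False
      by blast
  qed
  then have "ZpN_add p z y = y"
    using y by (auto simp: ZpN_add_def ZpN_def PiE_def Pi_def)
  with x_eq show "x = y"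
    by simp
qed

lemma ZpN_embeds_if_box_stable:
  fixes a :: "nat \<Rightarrow> 'a::{complete_space, ab_group_add}"
  assumes "topological_group_ax TYPE('a)" "prime p" "box_stable a"
    and "\<And>k. a k \<noteq> 0" "\<And>k. a k \<in> torsion p"
    and "\<And>k m. zscale m (a k) \<in> int_span a k \<Longrightarrow> zscale m (a k) = 0"
  shows "ZpN_embeds p TYPE('a)"
  unfolding ZpN_embeds_def
proof (intro exI[of _ "lin_comb_limit a"] conjI ballI)
  show "lin_comb_limit a (ZpN_add p x y) = lin_comb_limit a x + lin_comb_limit a y"
    if "x \<in> ZpN p" "y \<in> ZpN p" for x y
    using that by (rule lin_comb_limit_ZpN_add[OF assms(1,3,5)])
  show "inj_on (lin_comb_limit a) (ZpN p)"
    by (rule inj_on_lin_comb_limit_ZpN[OF assms])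
  show "continuous_map (ZpN_topology p) euclidean (lin_comb_limit a)"
    by (rule continuous_map_lin_comb_limit_ZpN[OF assms(3)])
qed

section \<open>The dichotomy\<close>

lemma ell1Z_embeds_if_countable_torsion:
  assumes "topological_group_ax TYPE('a::{polish_space, ab_group_add})"
    and "uncountable (UNIV :: 'a set)" "\<And>p. prime p \<Longrightarrow> countable (torsion p :: 'a set)"
  shows "ell1Z_embeds TYPE('a)"
proof -
  define E where "E G = {x::'a. \<exists>m. m \<noteq> 0 \<and> zscale m x \<in> G}" for G
  have "uncountable_near_zero (UNIV :: 'a set)"
    by (rule uncountable_near_zero_subgroup[OF assms(1) _ assms(2)]) simp
  moreover have "countable (UNIV \<inter> E G)" if "countable G" for G
  proof (rule countable_subset)
    show "UNIV \<inter> E G \<subseteq> (\<Union>m\<in>- {0}. \<Union>s\<in>G. {x. zscale m x = s})"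
      by (auto simp: E_def)
    show "countable (\<Union>m\<in>- {0}. \<Union>s\<in>G. {x::'a. zscale m x = s})"
      using that countable_torsion[OF assms(3)]
      by (intro countable_UN countableI_type countable_zscale_fibre) auto
  qed
  ultimately obtain a where "box_stable a" "\<And>k. a k \<in> UNIV - E (int_span a k)"
    using exists_box_stable_seq[OF assms(1)] by blast
  then show ?thesis
    by (intro ell1Z_embeds_if_box_stable[OF assms(1)]) (auto simp: E_def)
qed

lemma ZpN_embeds_if_uncountable_torsion:
  assumes "topological_group_ax TYPE('a::{polish_space, ab_group_add})"
    and "prime p" "uncountable (torsion p :: 'a set)"
  shows "ZpN_embeds p TYPE('a)"
proof -
  define E where "E G = insert 0 {x::'a. \<exists>m. zscale m x \<in> G - {0}}" for G
  have "uncountable_near_zero (torsion p :: 'a set)"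
    by (rule uncountable_near_zero_subgroup[OF assms(1) _ assms(3)])
      (simp add: torsion_def zscale_diff_right)
  moreover have "countable (torsion p \<inter> E G)" if "countable G" for G
  proof (rule countable_subset)
    show "torsion p \<inter> E G \<subseteq> insert 0 (\<Union>m. {x \<in> torsion p. zscale m x \<in> G - {0}})"
      by (auto simp: E_def)
    have "countable {x \<in> torsion p. zscale m x \<in> G - {0}}" for m
    proof (rule countable_image_inj_on)
      show "countable (zscale m ` {x \<in> torsion p. zscale m x \<in> G - {0}})"
        using that by (rule countable_subset[rotated]) auto
      show "inj_on (zscale m) {x \<in> torsion p. zscale m x \<in> G - {0}}"
        using inj_on_zscale_torsion_prime[OF assms(2), of m] by (rule inj_on_subset) auto
    qed
    then show "countable (insert 0 (\<Union>m. {x::'a \<in> torsion p. zscale m x \<in> G - {0}}))"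
      by auto
  qed
  ultimately obtain a where "box_stable a" "\<And>k. a k \<in> torsion p - E (int_span a k)"
    using exists_box_stable_seq[OF assms(1)] by blast
  then show ?thesis
    by (intro ZpN_embeds_if_box_stable[OF assms(1,2)]) (auto simp: E_def)
qed

theorem theorem4p2:
  assumes "topological_group_ax TYPE('a::{polish_space, ab_group_add})"
    and "uncountable (UNIV :: 'a set)"
  shows "ell1Z_embeds TYPE('a) \<or> (\<exists>p::int. prime p \<and> ZpN_embeds p TYPE('a))"
proof (cases "\<exists>p::int. prime p \<and> uncountable (torsion p :: 'a set)")
  case True
  then show ?thesis
    using ZpN_embeds_if_uncountable_torsion[OF assms(1)] by blast
next
  case False
  then show ?thesis
    using ell1Z_embeds_if_countable_torsion[OF assms] by blast
qed

end
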